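(* Let $G$ be a simple graph with $m$ edges and girth $g(G)\ge 5$. For an edge $uv$ write $G_{uv}=G-\{u,v\}$. Then the number $p(G;5)$ of $5$-matchings of $G$ equals $\frac15$ times \begin{align*} &\frac{1}{24}m(m^4+10m^3+43m^2+54m-328)+\frac54 M_1(G)^2-\frac12\alpha(G)(m-7)-\frac56\alpha_2(G)\\ &-\frac1{12}M_1(G)(2m^3+30m^2+61m-225)+\frac12\beta(G)+\frac1{12}M_2(G)(6m^2+66m-239)\\ &+\frac1{24}F(G)(6m^2+24m-149)+\frac1{12}M_1^4(G)(m+10)+\frac14 M_2^2(G)-EM_2(G)-\frac5{24}M_1^5(G)\\ &+\frac18\sum_{uv\in E(G)}M_1(G_{uv})^2+\frac13\sum_{uv\in E(G)}m(G_{uv})F(G_{uv})-\frac14\sum_{uv\in E(G)}m(G_{uv})^2M_1(G_{uv})\\ &-\sum_{uv\in E(G)}EM_2(G_{uv})+\sum_{uv\in E(G)}m(G_{uv})M_2(G_{uv}), \end{align*} where $M_1(\cdot)^2$ and $m(\cdot)^2$ denote squares of numbers.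
   Context: All graphs are finite, simple and undirected. A $k$-matching is a set of $k$ pairwise vertex-disjoint edges; $p(G;k)$ is the number of $k$-matchings. $m(H)$ is the number of edges of $H$; $G-\{u,v\}$ is obtained by deleting vertices $u,v$. $d_G(v)$ is the degree of $v$; the girth is the length of a shortest cycle. $M_1^\alpha(G)=\sum_v d_G(v)^\alpha$ (exponent on degrees), $M_1=M_1^2$, $F=M_1^3$; $M_2(G)=\sum_{uv\in E(G)}d_G(u)d_G(v)$; $M_2^2(G)=\sum_{uv\in E(G)}d_G(u)^2d_G(v)^2$; $\alpha_\lambda(G)=\sum_{uv\in E(G)}d_G(u)d_G(v)[d_G(u)^\lambda+d_G(v)^\lambda]$, $\alpha=\alpha_1$. For an edge $e=uv$, $d_G(e)=d_G(u)+d_G(v)-2$; $e\sim f$ means distinct edges sharing a vertex, $e\cap f$ is that vertex, and sums over $e\sim f$ are over unordered pairs; $EM_2(G)=\sum_{e\sim f}d_G(e)d_G(f)$; $\beta(G)=\sum_{e\sim f}d_G(e\cap f)(d_G(e)+d_G(f))$. *)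

theory Defs
  imports Main "HOL-Library.Extended_Nat"
begin

definition simple_graph :: "'a set \<Rightarrow> 'a set set \<Rightarrow> bool" where
  "simple_graph V E \<longleftrightarrow> finite V \<and>
     (\<forall>e\<in>E. \<exists>u v. u \<noteq> v \<and> u \<in> V \<and> v \<in> V \<and> e = {u, v})"

definition deg :: "'a set set \<Rightarrow> 'a \<Rightarrow> nat" where
  "deg E v = card {e \<in> E. v \<in> e}"

definition has_cycle_len :: "'a set \<Rightarrow> 'a set set \<Rightarrow> nat \<Rightarrow> bool" where
  "has_cycle_len V E k \<longleftrightarrow> k \<ge> 3 \<and>
     (\<exists>f :: nat \<Rightarrow> 'a. inj_on f {..<k} \<and> f ` {..<k} \<subseteq> V \<and>
        (\<forall>i<k. {f i, f ((i + 1) mod k)} \<in> E))"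

definition girth :: "'a set \<Rightarrow> 'a set set \<Rightarrow> enat" where
  "girth V E = Inf {enat k | k. has_cycle_len V E k}"

definition num_matchings :: "'a set set \<Rightarrow> nat \<Rightarrow> nat" where
  "num_matchings E k = card {M. M \<subseteq> E \<and> card M = k \<and> pairwise disjnt M}"

definition del_verts_V :: "'a set \<Rightarrow> 'a set \<Rightarrow> 'a set" where
  "del_verts_V V S = V - S"

definition del_verts_E :: "'a set set \<Rightarrow> 'a set \<Rightarrow> 'a set set" where
  "del_verts_E E S = {e \<in> E. e \<inter> S = {}}"

definition num_edges :: "'a set set \<Rightarrow> real" where
  "num_edges E = real (card E)"

definition M1pow :: "nat \<Rightarrow> 'a set \<Rightarrow> 'a set set \<Rightarrow> real" where
  "M1pow a V E = (\<Sum>v\<in>V. real (deg E v) ^ a)"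

definition M1 :: "'a set \<Rightarrow> 'a set set \<Rightarrow> real" where
  "M1 V E = M1pow 2 V E"

definition Fidx :: "'a set \<Rightarrow> 'a set set \<Rightarrow> real" where
  "Fidx V E = M1pow 3 V E"

definition M2 :: "'a set set \<Rightarrow> real" where
  "M2 E = (\<Sum>e\<in>E. \<Prod>x\<in>e. real (deg E x))"

definition M2sq :: "'a set set \<Rightarrow> real" where
  "M2sq E = (\<Sum>e\<in>E. \<Prod>x\<in>e. real (deg E x) ^ 2)"

definition alpha_lam :: "nat \<Rightarrow> 'a set set \<Rightarrow> real" where
  "alpha_lam l E = (\<Sum>e\<in>E. (\<Prod>x\<in>e. real (deg E x)) * (\<Sum>x\<in>e. real (deg E x) ^ l))"

definition edeg :: "'a set set \<Rightarrow> 'a set \<Rightarrow> real" where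
  "edeg E e = (\<Sum>x\<in>e. real (deg E x)) - 2"

definition adj_pairs :: "'a set set \<Rightarrow> 'a set set set" where
  "adj_pairs E = {{e, f} | e f. e \<in> E \<and> f \<in> E \<and> e \<noteq> f \<and> e \<inter> f \<noteq> {}}"

definition EM2 :: "'a set set \<Rightarrow> real" where
  "EM2 E = (\<Sum>P\<in>adj_pairs E. \<Prod>e\<in>P. edeg E e)"

definition beta_idx :: "'a set set \<Rightarrow> real" where
  "beta_idx E = (\<Sum>P\<in>adj_pairs E. real (deg E (the_elem (\<Inter>P))) * (\<Sum>e\<in>P. edeg E e))"

end

theory Submission
  imports Defs
begin

(* Counting the pairs (M, e) with e in M gives (k + 1) p(G; k + 1) = sum over e of p(G_e; k),
   where G_e deletes both endpoints of the edge e. Starting from p(G; 1) = m this yields p(G; 2),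
   p(G; 3) and p(G; 4), and finally 5 p(G; 5) = sum over e of p(G_e; 4); the five sums in the
   statement are the terms of p(G_e; 4) that are kept unexpanded.
   Every step needs sums over e of indices of G_e. Since G has neither triangles nor 4-cycles,
   deleting the endpoints of uv lowers the degree of each other vertex by the number of its
   neighbours among u and v, which is at most one, and no remaining edge joins two such neighbours.
   So each index of G_e is the corresponding index of G corrected by degree data around u and v,
   and double counting over the arcs (ordered edges) turns the sum of these corrections into
   degree-based indices of G. Besides the indices of the statement this produces the sum over x of
   S(x)^2, S(x) the degree sum of the neighbours of x, which is eliminated through EM2. *)

section \<open>Matchings\<close>

definition matchings :: "'a set set \<Rightarrow> nat \<Rightarrow> 'a set set set" where
  "matchings E k = {M. M \<subseteq> E \<and> card M = k \<and> pairwise disjnt M}"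

lemma num_matchings_eq_card: "num_matchings E k = card (matchings E k)"
  by (simp add: num_matchings_def matchings_def)

lemma num_matchings_1: "num_matchings E 1 = card E"
proof -
  have "matchings E 1 = (\<lambda>e. {e}) ` E"
    by (auto simp: matchings_def card_Suc_eq)
  then show ?thesis
    by (simp add: num_matchings_eq_card card_image)
qed

lemma matchings_containing:
  assumes "finite E" "{} \<notin> E" "e \<in> E"
  shows "{M \<in> matchings E (Suc k). e \<in> M} = insert e ` matchings (del_verts_E E e) k"
proof
  show "{M \<in> matchings E (Suc k). e \<in> M} \<subseteq> insert e ` matchings (del_verts_E E e) k"
  proof
    fix M assume "M \<in> {M \<in> matchings E (Suc k). e \<in> M}"
    then have M: "M \<subseteq> E" "card M = Suc k" "pairwise disjnt M" "e \<in> M"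
      by (auto simp: matchings_def)
    have "M - {e} \<subseteq> del_verts_E E e"
      using M(1,3,4) by (auto simp: del_verts_E_def pairwise_def disjnt_def)
    moreover have "card (M - {e}) = k"
      using M(2,4) by simp
    moreover have "pairwise disjnt (M - {e})"
      using M(3) pairwise_subset by blast
    ultimately have "M - {e} \<in> matchings (del_verts_E E e) k"
      by (simp add: matchings_def)
    then show "M \<in> insert e ` matchings (del_verts_E E e) k"
      using M(4) by (metis image_eqI insert_Diff)
  qed
next
  show "insert e ` matchings (del_verts_E E e) k \<subseteq> {M \<in> matchings E (Suc k). e \<in> M}"
  proof
    fix M assume "M \<in> insert e ` matchings (del_verts_E E e) k"
    then obtain M' where M: "M = insert e M'" "M' \<subseteq> del_verts_E E e" "card M' = k"
      "pairwise disjnt M'"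
      by (auto simp: matchings_def)
    have "e \<notin> M'"
      using M(2) assms(2,3) by (auto simp: del_verts_E_def)
    moreover have "finite M'"
      using M(2) assms(1) by (auto simp: del_verts_E_def intro: finite_subset)
    moreover have "pairwise disjnt M"
      using M(2,4) by (auto simp: M(1) pairwise_insert del_verts_E_def disjnt_def)
    ultimately show "M \<in> {M \<in> matchings E (Suc k). e \<in> M}"
      using M(1-3) assms(3) by (auto simp: matchings_def del_verts_E_def)
  qed
qed

lemma num_matchings_Suc:
  assumes "finite E" "{} \<notin> E"
  shows "Suc k * num_matchings E (Suc k) = (\<Sum>e\<in>E. num_matchings (del_verts_E E e) k)"
proof -
  have fin: "finite (matchings E (Suc k))"
    using assms(1) by (auto simp: matchings_def intro: finite_subset[of _ "Pow E"])
  have "{e\<in>E. e \<in> M} = M" if "M \<in> matchings E (Suc k)" for M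
    using that by (auto simp: matchings_def)
  then have "Suc k * card (matchings E (Suc k)) = (\<Sum>M\<in>matchings E (Suc k). card {e\<in>E. e \<in> M})"
    by (simp add: matchings_def)
  also have "\<dots> = (\<Sum>e\<in>E. card {M \<in> matchings E (Suc k). e \<in> M})"
    using sum.swap_restrict[OF fin assms(1), of "\<lambda>_ _. 1::nat"] by simp
  also have "\<dots> = (\<Sum>e\<in>E. card (matchings (del_verts_E E e) k))"
  proof (rule sum.cong[OF refl])
    fix e assume e: "e \<in> E"
    have "e \<notin> M" if "M \<in> matchings (del_verts_E E e) k" for M
      using that e assms(2) by (auto simp: matchings_def del_verts_E_def)
    then have "inj_on (insert e) (matchings (del_verts_E E e) k)"
      by (meson inj_onI insert_ident)
    then show "card {M \<in> matchings E (Suc k). e \<in> M} = card (matchings (del_verts_E E e) k)"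
      by (simp add: matchings_containing[OF assms e] card_image)
  qed
  finally show ?thesis
    by (simp add: num_matchings_eq_card)
qed

section \<open>Simple graphs\<close>

abbreviation dg :: "'a set set \<Rightarrow> 'a \<Rightarrow> real" where
  "dg E x \<equiv> real (deg E x)"

definition nbrs :: "'a set set \<Rightarrow> 'a \<Rightarrow> 'a set" where
  "nbrs E x = {y. {x, y} \<in> E}"

definition nbr_sum :: "'a set set \<Rightarrow> ('a \<Rightarrow> real) \<Rightarrow> 'a \<Rightarrow> real" where
  "nbr_sum E f x = (\<Sum>y\<in>nbrs E x. f y)"

abbreviation nbr_deg_sum :: "'a set set \<Rightarrow> 'a \<Rightarrow> real" where
  "nbr_deg_sum E \<equiv> nbr_sum E (dg E)"

definition arc_sum :: "'a set \<Rightarrow> 'a set set \<Rightarrow> ('a \<Rightarrow> 'a \<Rightarrow> real) \<Rightarrow> real" where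
  "arc_sum V E f = (\<Sum>x\<in>V. \<Sum>y\<in>nbrs E x. f x y)"

lemma in_nbrs_iff: "y \<in> nbrs E x \<longleftrightarrow> {x, y} \<in> E"
  by (simp add: nbrs_def)

lemma in_nbrs_sym: "y \<in> nbrs E x \<longleftrightarrow> x \<in> nbrs E y"
  by (simp add: nbrs_def insert_commute)

lemma nbrs_del_verts: "nbrs (del_verts_E E S) x = (if x \<in> S then {} else nbrs E x - S)"
  by (auto simp: nbrs_def del_verts_E_def)

lemma nbr_sum_diff: "nbr_sum E (\<lambda>y. f y - g y) x = nbr_sum E f x - nbr_sum E g x"
  by (simp add: nbr_sum_def sum_subtractf)

lemma nbr_sum_cmult: "nbr_sum E (\<lambda>y. c * f y) x = c * nbr_sum E f x"
  by (simp add: nbr_sum_def sum_distrib_left)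

lemma arc_sum_cong:
  "(\<And>x y. x \<in> V \<Longrightarrow> y \<in> nbrs E x \<Longrightarrow> f x y = g x y) \<Longrightarrow> arc_sum V E f = arc_sum V E g"
  unfolding arc_sum_def by (intro sum.cong refl) auto

lemma arc_sum_add: "arc_sum V E (\<lambda>x y. f x y + g x y) = arc_sum V E f + arc_sum V E g"
  by (simp add: arc_sum_def sum.distrib)

lemma arc_sum_diff: "arc_sum V E (\<lambda>x y. f x y - g x y) = arc_sum V E f - arc_sum V E g"
  by (simp add: arc_sum_def sum_subtractf)

lemma arc_sum_mult: "arc_sum V E (\<lambda>x y. f x * g y) = (\<Sum>x\<in>V. f x * nbr_sum E g x)"
  by (simp add: arc_sum_def nbr_sum_def sum_distrib_left)

locale sgraph =
  fixes V :: "'a set" and E :: "'a set set"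
  assumes simple: "simple_graph V E"
begin

lemma finite_V: "finite V"
  using simple by (simp add: simple_graph_def)

lemma edgeE:
  assumes "e \<in> E"
  obtains u v where "u \<noteq> v" "u \<in> V" "v \<in> V" "e = {u, v}"
  using simple assms by (auto simp: simple_graph_def)

lemma edge_vertices: "{x, y} \<in> E \<Longrightarrow> x \<in> V \<and> y \<in> V \<and> x \<noteq> y"
  by (erule edgeE) (auto simp: doubleton_eq_iff)

lemma finite_E: "finite E"
  by (rule finite_subset[of _ "Pow V"]) (auto elim: edgeE simp: finite_V)

lemma empty_not_edge: "{} \<notin> E"
  by (auto elim: edgeE)

lemma nbrs_subset: "nbrs E x \<subseteq> V"
  using edge_vertices by (auto simp: in_nbrs_iff)

lemma finite_nbrs: "finite (nbrs E x)"
  using finite_subset[OF nbrs_subset finite_V] .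

lemma not_in_nbrs_self: "x \<notin> nbrs E x"
  using edge_vertices[of x x] by (auto simp: in_nbrs_iff)

lemma nbr_neq: "y \<in> nbrs E x \<Longrightarrow> x \<noteq> y"
  using not_in_nbrs_self by blast

lemma edge_subset: "e \<in> E \<Longrightarrow> e \<subseteq> V"
  by (auto elim: edgeE)

lemma incident_edges: "{e \<in> E. x \<in> e} = (\<lambda>y. {x, y}) ` nbrs E x"
proof
  show "{e \<in> E. x \<in> e} \<subseteq> (\<lambda>y. {x, y}) ` nbrs E x"
  proof
    fix e assume e: "e \<in> {e \<in> E. x \<in> e}"
    then obtain u v where "e = {u, v}"
      by (auto elim: edgeE)
    with e show "e \<in> (\<lambda>y. {x, y}) ` nbrs E x"
      by (auto simp: in_nbrs_iff insert_commute)
  qed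
qed (auto simp: in_nbrs_iff)

lemma inj_on_edges_at: "inj_on (\<lambda>y. {x, y}) (nbrs E x)"
  by (auto simp: inj_on_def doubleton_eq_iff)

lemma deg_eq_card_nbrs: "deg E x = card (nbrs E x)"
  by (simp add: deg_def incident_edges card_image[OF inj_on_edges_at])

lemma nbr_sum_const: "nbr_sum E (\<lambda>y. c) x = dg E x * c"
  by (simp add: nbr_sum_def deg_eq_card_nbrs)

lemma sum_edges_cong:
  "(\<And>u v. u \<noteq> v \<Longrightarrow> {u, v} \<in> E \<Longrightarrow> F {u, v} = G {u, v}) \<Longrightarrow> sum F E = sum G E"
  by (rule sum.cong[OF refl]) (metis edgeE)

lemma sum_edges_eq_arc_sum: "(\<Sum>e\<in>E. F e) = arc_sum V E (\<lambda>x y. F {x, y}) / 2"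
proof -
  have "(\<Sum>e\<in>E. F e) = (\<Sum>e\<in>E. \<Sum>x\<in>e. F e / 2)"
    by (intro sum.cong refl) (auto elim: edgeE)
  also have "\<dots> = (\<Sum>e\<in>E. \<Sum>x\<in>{x\<in>V. x \<in> e}. F e / 2)"
    using edge_subset by (intro sum.cong refl) (auto intro: arg_cong[where f = "\<lambda>A. sum _ A"])
  also have "\<dots> = (\<Sum>x\<in>V. \<Sum>e\<in>{e\<in>E. x \<in> e}. F e / 2)"
    by (rule sum.swap_restrict[OF finite_V finite_E, symmetric])
  also have "\<dots> = (\<Sum>x\<in>V. \<Sum>y\<in>nbrs E x. F {x, y} / 2)"
    by (simp add: incident_edges sum.reindex[OF inj_on_edges_at])
  finally show ?thesis
    by (simp add: arc_sum_def sum_divide_distrib)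
qed

lemma arc_sum_swap: "arc_sum V E f = arc_sum V E (\<lambda>x y. f y x)"
proof -
  have "(\<Sum>x\<in>V. \<Sum>y\<in>{y\<in>V. y \<in> nbrs E x}. f x y) = (\<Sum>y\<in>V. \<Sum>x\<in>{x\<in>V. y \<in> nbrs E x}. f x y)"
    by (rule sum.swap_restrict[OF finite_V finite_V])
  moreover have "{y\<in>V. y \<in> nbrs E x} = nbrs E x" for x
    using nbrs_subset by auto
  moreover have "{x\<in>V. y \<in> nbrs E x} = nbrs E y" for y
    using nbrs_subset in_nbrs_sym by fastforce
  ultimately show ?thesis
    by (simp add: arc_sum_def)
qed

lemma arc_sum_fst: "arc_sum V E (\<lambda>x y. f x) = (\<Sum>x\<in>V. dg E x * f x)"
  using arc_sum_mult[of V E f "\<lambda>_. 1"] by (simp add: nbr_sum_const mult.commute)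

lemma arc_sum_snd: "arc_sum V E (\<lambda>x y. f y) = (\<Sum>x\<in>V. dg E x * f x)"
  using arc_sum_swap[of "\<lambda>x y. f y"] by (simp add: arc_sum_fst)

lemma arc_sum_sym: "arc_sum V E (\<lambda>x y. f x + f y) = 2 * (\<Sum>x\<in>V. dg E x * f x)"
  by (simp add: arc_sum_add arc_sum_fst arc_sum_snd)

lemma sum_mult_nbr_sum_swap: "(\<Sum>x\<in>V. f x * nbr_sum E g x) = (\<Sum>x\<in>V. g x * nbr_sum E f x)"
  using arc_sum_swap[of "\<lambda>x y. f x * g y"] arc_sum_mult[of V E f g] arc_sum_mult[of V E g f]
  by (simp add: mult.commute)

lemma sum_deg: "(\<Sum>x\<in>V. dg E x) = 2 * num_edges E"
  using sum_edges_eq_arc_sum[of "\<lambda>_. 1"] arc_sum_fst[of "\<lambda>_. 1"] by (simp add: num_edges_def)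

lemma sum_edges_sum: "(\<Sum>e\<in>E. \<Sum>x\<in>e. f x) = (\<Sum>x\<in>V. dg E x * f x)"
proof -
  have "(\<Sum>e\<in>E. \<Sum>x\<in>e. f x) = arc_sum V E (\<lambda>x y. f x + f y) / 2"
    unfolding sum_edges_eq_arc_sum[of "\<lambda>e. \<Sum>x\<in>e. f x"]
    by (intro arg_cong[where f = "\<lambda>t. t / 2"] arc_sum_cong) (auto dest: nbr_neq)
  then show ?thesis
    by (simp add: arc_sum_sym)
qed

lemma sum_edges_sum_mult_sum:
  "(\<Sum>e\<in>E. (\<Sum>x\<in>e. f x) * (\<Sum>x\<in>e. g x))
    = (\<Sum>x\<in>V. dg E x * f x * g x) + (\<Sum>x\<in>V. f x * nbr_sum E g x)"
proof -
  have "(\<Sum>e\<in>E. (\<Sum>x\<in>e. f x) * (\<Sum>x\<in>e. g x))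
      = arc_sum V E (\<lambda>x y. (f x * g x + f y * g y) + (f x * g y + f y * g x)) / 2"
    unfolding sum_edges_eq_arc_sum
    by (intro arg_cong[where f = "\<lambda>t. t / 2"] arc_sum_cong) (auto dest: nbr_neq simp: algebra_simps)
  also have "\<dots> = (\<Sum>x\<in>V. dg E x * (f x * g x)) + arc_sum V E (\<lambda>x y. f x * g y)"
    using arc_sum_swap[of "\<lambda>x y. f y * g x"] by (simp add: arc_sum_add arc_sum_fst arc_sum_snd)
  finally show ?thesis
    by (simp add: arc_sum_mult mult.assoc)
qed

end

section \<open>Degree-based indices\<close>

definition nbr_deg_sum_sq :: "'a set \<Rightarrow> 'a set set \<Rightarrow> real" where
  "nbr_deg_sum_sq V E = (\<Sum>x\<in>V. nbr_deg_sum E x ^ 2)"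

context sgraph
begin

lemma sum_deg_mult_pow: "(\<Sum>x\<in>V. dg E x * dg E x ^ k) = M1pow (Suc k) V E"
  by (simp add: M1pow_def)

lemma sum_nbr_deg_sum: "(\<Sum>x\<in>V. nbr_deg_sum E x) = M1 V E"
  using sum_mult_nbr_sum_swap[of "\<lambda>_. 1" "dg E"]
  by (simp add: nbr_sum_const M1_def M1pow_def power2_eq_square)

lemma alpha_lam_eq_vertex_sum: "alpha_lam l E = (\<Sum>x\<in>V. dg E x ^ Suc l * nbr_deg_sum E x)"
proof -
  have "alpha_lam l E = arc_sum V E (\<lambda>x y. dg E x ^ Suc l * dg E y + dg E y ^ Suc l * dg E x) / 2"
    unfolding alpha_lam_def sum_edges_eq_arc_sum
    by (intro arg_cong[where f = "\<lambda>t. t / 2"] arc_sum_cong) (auto dest: nbr_neq simp: algebra_simps)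
  also have "\<dots> = arc_sum V E (\<lambda>x y. dg E x ^ Suc l * dg E y)"
    using arc_sum_swap[of "\<lambda>x y. dg E y ^ Suc l * dg E x"] by (simp add: arc_sum_add)
  finally show ?thesis
    by (simp add: arc_sum_mult)
qed

lemma alpha_lam_0: "alpha_lam 0 E = 2 * M2 E"
  unfolding alpha_lam_def M2_def sum_distrib_left
  by (rule sum_edges_cong) simp

lemma sum_deg_mult_nbr_deg_sum:
  "(\<Sum>x\<in>V. dg E x * nbr_deg_sum E x) = 2 * M2 E"
  "(\<Sum>x\<in>V. dg E x ^ 2 * nbr_deg_sum E x) = alpha_lam 1 E"
  "(\<Sum>x\<in>V. dg E x ^ 3 * nbr_deg_sum E x) = alpha_lam 2 E"
  using alpha_lam_eq_vertex_sum[of 0] alpha_lam_eq_vertex_sum[of 1] alpha_lam_eq_vertex_sum[of 2]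
    alpha_lam_0
  by (simp_all add: numeral_eq_Suc)

lemmas vertex_sums = sum_deg sum_nbr_deg_sum sum_deg_mult_nbr_deg_sum
  M1pow_def[symmetric] nbr_deg_sum_sq_def[symmetric]

lemma sum_nbr_excess:
  "(\<Sum>x\<in>V. nbr_deg_sum E x - dg E x) = M1 V E - 2 * num_edges E"
  "(\<Sum>x\<in>V. (nbr_deg_sum E x - dg E x) * dg E x) = 2 * M2 E - M1 V E"
  "(\<Sum>x\<in>V. (nbr_deg_sum E x - dg E x) * dg E x ^ 2) = alpha_lam 1 E - Fidx V E"
  "(\<Sum>x\<in>V. (nbr_deg_sum E x - dg E x) * dg E x ^ 3) = alpha_lam 2 E - M1pow 4 V E"
proof -
  have pow: "(\<Sum>x\<in>V. (nbr_deg_sum E x - dg E x) * dg E x ^ j)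
      = (\<Sum>x\<in>V. dg E x ^ j * nbr_deg_sum E x) - M1pow (Suc j) V E" for j
    by (simp add: sum_subtractf algebra_simps flip: sum_deg_mult_pow)
  show "(\<Sum>x\<in>V. nbr_deg_sum E x - dg E x) = M1 V E - 2 * num_edges E"
    by (simp add: sum_subtractf sum_nbr_deg_sum sum_deg)
  show "(\<Sum>x\<in>V. (nbr_deg_sum E x - dg E x) * dg E x) = 2 * M2 E - M1 V E"
    using pow[of 1] by (simp add: sum_deg_mult_nbr_deg_sum M1_def numeral_2_eq_2)
  show "(\<Sum>x\<in>V. (nbr_deg_sum E x - dg E x) * dg E x ^ 2) = alpha_lam 1 E - Fidx V E"
    using pow[of 2] by (simp add: sum_deg_mult_nbr_deg_sum Fidx_def)
  show "(\<Sum>x\<in>V. (nbr_deg_sum E x - dg E x) * dg E x ^ 3) = alpha_lam 2 E - M1pow 4 V E"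
    using pow[of 3] by (simp add: sum_deg_mult_nbr_deg_sum)
qed

lemma sum_nbr_excess_cubic:
  "(\<Sum>x\<in>V. (nbr_deg_sum E x - dg E x) * (a + b * dg E x + c * dg E x ^ 2 + d * dg E x ^ 3))
    = a * (M1 V E - 2 * num_edges E) + b * (2 * M2 E - M1 V E) + c * (alpha_lam 1 E - Fidx V E)
      + d * (alpha_lam 2 E - M1pow 4 V E)"
proof -
  have "(\<Sum>x\<in>V. (nbr_deg_sum E x - dg E x) * (a + b * dg E x + c * dg E x ^ 2 + d * dg E x ^ 3))
      = (\<Sum>x\<in>V. a * (nbr_deg_sum E x - dg E x) + b * ((nbr_deg_sum E x - dg E x) * dg E x)
          + c * ((nbr_deg_sum E x - dg E x) * dg E x ^ 2)
          + d * ((nbr_deg_sum E x - dg E x) * dg E x ^ 3))"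
    by (rule sum.cong) (simp_all add: algebra_simps)
  then show ?thesis
    by (simp only: sum.distrib sum_nbr_excess flip: sum_distrib_left)
qed

lemma sum_edges_deg_sum_pow:
  "(\<Sum>e\<in>E. \<Sum>x\<in>e. dg E x) = M1 V E"
  "(\<Sum>e\<in>E. (\<Sum>x\<in>e. dg E x) ^ 2) = Fidx V E + 2 * M2 E"
  "(\<Sum>e\<in>E. (\<Sum>x\<in>e. dg E x) ^ 3) = M1pow 4 V E + 3 * alpha_lam 1 E"
  "(\<Sum>e\<in>E. (\<Sum>x\<in>e. dg E x) ^ 4) = M1pow 5 V E + 4 * alpha_lam 2 E + 6 * M2sq E"
proof -
  have pow: "(\<Sum>e\<in>E. \<Sum>x\<in>e. dg E x ^ k) = M1pow (Suc k) V E" for k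
    by (simp add: sum_edges_sum sum_deg_mult_pow)
  show "(\<Sum>e\<in>E. \<Sum>x\<in>e. dg E x) = M1 V E"
    using pow[of 1] by (simp add: M1_def numeral_2_eq_2)
  have "(\<Sum>e\<in>E. (\<Sum>x\<in>e. dg E x) ^ 2) = (\<Sum>e\<in>E. (\<Sum>x\<in>e. dg E x ^ 2) + 2 * (\<Prod>x\<in>e. dg E x))"
    by (rule sum_edges_cong) (simp add: power2_eq_square algebra_simps)
  then show "(\<Sum>e\<in>E. (\<Sum>x\<in>e. dg E x) ^ 2) = Fidx V E + 2 * M2 E"
    using pow[of 2] by (simp add: sum.distrib M2_def Fidx_def sum_distrib_left numeral_3_eq_3)
  have "(\<Sum>e\<in>E. (\<Sum>x\<in>e. dg E x) ^ 3)
      = (\<Sum>e\<in>E. (\<Sum>x\<in>e. dg E x ^ 3) + 3 * ((\<Prod>x\<in>e. dg E x) * (\<Sum>x\<in>e. dg E x ^ 1)))"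
    by (rule sum_edges_cong) (simp add: power3_eq_cube algebra_simps)
  then show "(\<Sum>e\<in>E. (\<Sum>x\<in>e. dg E x) ^ 3) = M1pow 4 V E + 3 * alpha_lam 1 E"
    using pow[of 3] by (simp add: sum.distrib alpha_lam_def sum_distrib_left numeral_eq_Suc)
  have "(\<Sum>e\<in>E. (\<Sum>x\<in>e. dg E x) ^ 4) = (\<Sum>e\<in>E. (\<Sum>x\<in>e. dg E x ^ 4)
      + 4 * ((\<Prod>x\<in>e. dg E x) * (\<Sum>x\<in>e. dg E x ^ 2)) + 6 * (\<Prod>x\<in>e. dg E x ^ 2))"
    by (rule sum_edges_cong) (simp add: power_numeral_reduce algebra_simps)
  then show "(\<Sum>e\<in>E. (\<Sum>x\<in>e. dg E x) ^ 4) = M1pow 5 V E + 4 * alpha_lam 2 E + 6 * M2sq E"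
    using pow[of 4]
    by (simp add: sum.distrib alpha_lam_def M2sq_def sum_distrib_left numeral_eq_Suc)
qed

lemma sgraph_line_graph: "sgraph E (adj_pairs E)"
  by unfold_locales (auto simp: simple_graph_def adj_pairs_def finite_E)

lemma adjacent_edges_eq:
  assumes "y \<in> nbrs E x"
  shows "{f \<in> E. f \<noteq> {x, y} \<and> {x, y} \<inter> f \<noteq> {}}
    = (\<lambda>z. {x, z}) ` (nbrs E x - {y}) \<union> (\<lambda>z. {y, z}) ` (nbrs E y - {x})"
proof
  show "{f \<in> E. f \<noteq> {x, y} \<and> {x, y} \<inter> f \<noteq> {}}
    \<subseteq> (\<lambda>z. {x, z}) ` (nbrs E x - {y}) \<union> (\<lambda>z. {y, z}) ` (nbrs E y - {x})"
  proof
    fix f assume f: "f \<in> {f \<in> E. f \<noteq> {x, y} \<and> {x, y} \<inter> f \<noteq> {}}"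
    then obtain p q where "f = {p, q}"
      by (blast elim: edgeE)
    with f show "f \<in> (\<lambda>z. {x, z}) ` (nbrs E x - {y}) \<union> (\<lambda>z. {y, z}) ` (nbrs E y - {x})"
      by (auto simp: in_nbrs_iff insert_commute)
  qed
qed (auto simp: in_nbrs_iff doubleton_eq_iff)

text \<open>The adjacent pairs are the edges of the line graph, so they can be summed over its arcs.\<close>

lemma sum_adj_pairs:
  "(\<Sum>P\<in>adj_pairs E. F P) = arc_sum V E (\<lambda>x y. \<Sum>z\<in>nbrs E x - {y}. F {{x, y}, {x, z}}) / 2"
proof -
  interpret L: sgraph E "adj_pairs E"
    by (rule sgraph_line_graph)
  have nbrs_L: "nbrs (adj_pairs E) e = {f \<in> E. f \<noteq> e \<and> e \<inter> f \<noteq> {}}" if "e \<in> E" for e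
    using that unfolding nbrs_def adj_pairs_def by (auto simp: doubleton_eq_iff)
  have "(\<Sum>P\<in>adj_pairs E. F P) = (\<Sum>e\<in>E. \<Sum>f\<in>nbrs (adj_pairs E) e. F {e, f}) / 2"
    by (simp add: L.sum_edges_eq_arc_sum arc_sum_def)
  also have "\<dots> = arc_sum V E (\<lambda>x y. \<Sum>f\<in>{f \<in> E. f \<noteq> {x, y} \<and> {x, y} \<inter> f \<noteq> {}}. F {{x, y}, f}) / 4"
    by (simp add: nbrs_L sum_edges_eq_arc_sum)
  also have "\<dots> = arc_sum V E (\<lambda>x y. (\<Sum>z\<in>nbrs E x - {y}. F {{x, y}, {x, z}})
      + (\<Sum>z\<in>nbrs E y - {x}. F {{x, y}, {y, z}})) / 4"
  proof (intro arg_cong[where f = "\<lambda>t. t / 4"] arc_sum_cong)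
    fix x y assume y: "y \<in> nbrs E x"
    have "(\<lambda>z. {x, z}) ` (nbrs E x - {y}) \<inter> (\<lambda>z. {y, z}) ` (nbrs E y - {x}) = {}"
      using y not_in_nbrs_self[of x] by (auto simp: doubleton_eq_iff)
    moreover have "inj_on (\<lambda>z. {x, z}) (nbrs E x - {y})" "inj_on (\<lambda>z. {y, z}) (nbrs E y - {x})"
      by (auto simp: inj_on_def doubleton_eq_iff)
    ultimately show "(\<Sum>f\<in>{f \<in> E. f \<noteq> {x, y} \<and> {x, y} \<inter> f \<noteq> {}}. F {{x, y}, f})
      = (\<Sum>z\<in>nbrs E x - {y}. F {{x, y}, {x, z}}) + (\<Sum>z\<in>nbrs E y - {x}. F {{x, y}, {y, z}})"
      unfolding adjacent_edges_eq[OF y] by (simp add: sum.union_disjoint finite_nbrs sum.reindex)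
  qed
  also have "\<dots> = arc_sum V E (\<lambda>x y. \<Sum>z\<in>nbrs E x - {y}. F {{x, y}, {x, z}}) / 2"
    using arc_sum_swap[of "\<lambda>x y. \<Sum>z\<in>nbrs E x - {y}. F {{x, y}, {x, z}}"]
    by (simp add: arc_sum_add insert_commute)
  finally show ?thesis .
qed

lemma edeg_nbr: "y \<in> nbrs E x \<Longrightarrow> edeg E {x, y} = dg E x + dg E y - 2"
  by (auto simp: edeg_def dest: nbr_neq)

lemma sum_edeg_incident: "(\<Sum>y\<in>nbrs E x. edeg E {x, y}) = dg E x ^ 2 + nbr_deg_sum E x - 2 * dg E x"
proof -
  have "(\<Sum>y\<in>nbrs E x. edeg E {x, y}) = (\<Sum>y\<in>nbrs E x. dg E x + dg E y - 2)"
    by (intro sum.cong refl) (simp add: edeg_nbr)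
  then show ?thesis
    by (simp add: sum.distrib sum_subtractf nbr_sum_def deg_eq_card_nbrs power2_eq_square
        algebra_simps)
qed

lemma EM2_eq_vertex_sum:
  "EM2 E = (\<Sum>x\<in>V. (\<Sum>y\<in>nbrs E x. edeg E {x, y}) ^ 2) / 2 - (\<Sum>e\<in>E. edeg E e ^ 2)"
proof -
  define T where "T x = (\<Sum>y\<in>nbrs E x. edeg E {x, y})" for x
  have "EM2 E = arc_sum V E (\<lambda>x y. edeg E {x, y} * (T x - edeg E {x, y})) / 2"
    unfolding EM2_def sum_adj_pairs
  proof (intro arg_cong[where f = "\<lambda>t. t / 2"] arc_sum_cong)
    fix x y assume y: "y \<in> nbrs E x"
    have "(\<Sum>z\<in>nbrs E x - {y}. \<Prod>e\<in>{{x, y}, {x, z}}. edeg E e)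
        = (\<Sum>z\<in>nbrs E x - {y}. edeg E {x, y} * edeg E {x, z})"
      by (intro sum.cong refl) (auto simp: doubleton_eq_iff)
    also have "\<dots> = edeg E {x, y} * (T x - edeg E {x, y})"
      using y by (simp add: T_def sum_diff1 finite_nbrs sum_distrib_left[symmetric])
    finally show "(\<Sum>z\<in>nbrs E x - {y}. \<Prod>e\<in>{{x, y}, {x, z}}. edeg E e)
        = edeg E {x, y} * (T x - edeg E {x, y})" .
  qed
  also have "\<dots> = (\<Sum>x\<in>V. T x ^ 2) / 2 - arc_sum V E (\<lambda>x y. edeg E {x, y} ^ 2) / 2"
    by (simp add: arc_sum_def T_def right_diff_distrib sum_subtractf sum_distrib_right
        power2_eq_square diff_divide_distrib mult.commute)
  finally show ?thesis
    by (simp add: T_def sum_edges_eq_arc_sum)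
qed

lemma EM2_eq:
  "EM2 E = (M1pow 4 V E + nbr_deg_sum_sq V E) / 2 + alpha_lam 1 E - 3 * Fidx V E - 6 * M2 E
    + 6 * M1 V E - 4 * num_edges E"
proof -
  have "(\<Sum>x\<in>V. (\<Sum>y\<in>nbrs E x. edeg E {x, y}) ^ 2)
      = (\<Sum>x\<in>V. dg E x ^ 4 + nbr_deg_sum E x ^ 2 + 4 * dg E x ^ 2
          + 2 * (dg E x ^ 2 * nbr_deg_sum E x) - 4 * dg E x ^ 3 - 4 * (dg E x * nbr_deg_sum E x))"
    by (intro sum.cong refl) (simp add: sum_edeg_incident power_numeral_reduce algebra_simps)
  also have "\<dots> = M1pow 4 V E + nbr_deg_sum_sq V E + 4 * M1 V E + 2 * alpha_lam 1 E
      - 4 * Fidx V E - 8 * M2 E"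
    by (simp add: sum.distrib sum_subtractf sum_distrib_left[symmetric] sum_deg_mult_nbr_deg_sum
        M1pow_def M1_def Fidx_def nbr_deg_sum_sq_def)
  finally have T: "(\<Sum>x\<in>V. (\<Sum>y\<in>nbrs E x. edeg E {x, y}) ^ 2) = \<dots>" .
  have edeg_sq: "(\<Sum>e\<in>E. edeg E e ^ 2) = Fidx V E + 2 * M2 E - 4 * M1 V E + 4 * num_edges E"
  proof -
    have "(\<Sum>e\<in>E. edeg E e ^ 2) = (\<Sum>e\<in>E. (\<Sum>x\<in>e. dg E x) ^ 2 - 4 * (\<Sum>x\<in>e. dg E x) + 4)"
      by (intro sum.cong refl) (simp add: edeg_def power2_eq_square algebra_simps)
    then show ?thesis
      by (simp add: sum.distrib sum_subtractf sum_distrib_left[symmetric] sum_edges_deg_sum_pow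
          num_edges_def)
  qed
  show ?thesis
    unfolding EM2_eq_vertex_sum T edeg_sq by (simp add: field_simps)
qed

lemma beta_idx_eq_arc_sum:
  "beta_idx E = arc_sum V E (\<lambda>x y. dg E x * ((dg E x - 2) * edeg E {x, y}
    + (\<Sum>z\<in>nbrs E x. edeg E {x, z}))) / 2"
  unfolding beta_idx_def sum_adj_pairs
proof (intro arg_cong[where f = "\<lambda>t. t / 2"] arc_sum_cong)
  fix x y assume y: "y \<in> nbrs E x"
  have "(\<Sum>z\<in>nbrs E x - {y}. dg E (the_elem (\<Inter>{{x, y}, {x, z}}))
        * (\<Sum>e\<in>{{x, y}, {x, z}}. edeg E e))
      = (\<Sum>z\<in>nbrs E x - {y}. dg E x * (edeg E {x, y} + edeg E {x, z}))"
    using y by (intro sum.cong refl) (auto simp: doubleton_eq_iff dest: nbr_neq)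
  also have "\<dots> = (\<Sum>z\<in>nbrs E x. dg E x * (edeg E {x, y} + edeg E {x, z}))
      - dg E x * (2 * edeg E {x, y})"
    using y by (simp add: sum_diff1 finite_nbrs)
  also have "\<dots> = dg E x * ((dg E x - 2) * edeg E {x, y} + (\<Sum>z\<in>nbrs E x. edeg E {x, z}))"
    by (simp add: sum.distrib deg_eq_card_nbrs algebra_simps flip: sum_distrib_left)
  finally show "(\<Sum>z\<in>nbrs E x - {y}. dg E (the_elem (\<Inter>{{x, y}, {x, z}}))
        * (\<Sum>e\<in>{{x, y}, {x, z}}. edeg E e))
      = dg E x * ((dg E x - 2) * edeg E {x, y} + (\<Sum>z\<in>nbrs E x. edeg E {x, z}))" .
qed

lemma beta_idx_eq_vertex_sum:
  "beta_idx E = (\<Sum>x\<in>V. dg E x * (dg E x - 1) * (\<Sum>y\<in>nbrs E x. edeg E {x, y}))"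
proof -
  define T where "T x = (\<Sum>y\<in>nbrs E x. edeg E {x, y})" for x
  have "(\<Sum>y\<in>nbrs E x. dg E x * ((dg E x - 2) * edeg E {x, y} + T x))
      = 2 * (dg E x * (dg E x - 1) * T x)" for x
  proof -
    have "(\<Sum>y\<in>nbrs E x. dg E x * ((dg E x - 2) * edeg E {x, y} + T x))
        = dg E x * (dg E x - 2) * T x + dg E x * (dg E x * T x)"
      by (simp add: T_def distrib_left sum.distrib mult.assoc deg_eq_card_nbrs
          flip: sum_distrib_left)
    then show ?thesis
      by (simp add: algebra_simps)
  qed
  then have "arc_sum V E (\<lambda>x y. dg E x * ((dg E x - 2) * edeg E {x, y} + T x))
      = (\<Sum>x\<in>V. 2 * (dg E x * (dg E x - 1) * T x))"
    by (simp add: arc_sum_def)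
  then show ?thesis
    by (simp add: beta_idx_eq_arc_sum flip: T_def sum_distrib_left)
qed

lemma beta_idx_eq:
  "beta_idx E = M1pow 4 V E + alpha_lam 1 E - 3 * Fidx V E - 2 * M2 E + 2 * M1 V E"
proof -
  have "beta_idx E = (\<Sum>x\<in>V. dg E x ^ 4 + dg E x ^ 2 * nbr_deg_sum E x - 3 * dg E x ^ 3
      - dg E x * nbr_deg_sum E x + 2 * dg E x ^ 2)"
    by (simp add: beta_idx_eq_vertex_sum sum_edeg_incident power_numeral_reduce algebra_simps)
  then show ?thesis
    by (simp add: sum.distrib sum_subtractf sum_distrib_left[symmetric] sum_deg_mult_nbr_deg_sum
        M1pow_def M1_def Fidx_def)
qed

end

section \<open>Deleting the endpoints of an edge\<close>

context sgraph
begin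

lemma sgraph_del_verts: "sgraph (del_verts_V V S) (del_verts_E E S)"
  by unfold_locales
    (auto simp: simple_graph_def del_verts_V_def del_verts_E_def finite_V elim!: edgeE)

lemma num_matchings_Suc_real:
  "real (num_matchings E (Suc k)) = (\<Sum>e\<in>E. real (num_matchings (del_verts_E E e) k)) / Suc k"
  using num_matchings_Suc[OF finite_E empty_not_edge, of k]
  by (simp add: field_simps flip: of_nat_sum of_nat_mult)

lemma num_edges_del_edge:
  assumes "e \<in> E"
  shows "num_edges (del_verts_E E e) = num_edges E + 1 - (\<Sum>x\<in>e. dg E x)"
proof -
  obtain u v where uv: "u \<noteq> v" "e = {u, v}"
    using assms by (auto elim: edgeE)
  let ?A = "{f \<in> E. u \<in> f}" and ?B = "{f \<in> E. v \<in> f}"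
  have "?A \<inter> ?B = {e}"
  proof
    show "?A \<inter> ?B \<subseteq> {e}"
    proof
      fix f assume f: "f \<in> ?A \<inter> ?B"
      then obtain p q where "f = {p, q}"
        by (blast elim: edgeE)
      with f uv show "f \<in> {e}"
        by auto
    qed
  qed (use assms uv in auto)
  then have "card ?A + card ?B = card (?A \<union> ?B) + 1"
    using card_Un_Int[of ?A ?B] finite_E by simp
  moreover have "card E = card (del_verts_E E e) + card (?A \<union> ?B)"
  proof -
    have "E = del_verts_E E e \<union> (?A \<union> ?B)"
      using uv by (auto simp: del_verts_E_def)
    then have "card E = card (del_verts_E E e \<union> (?A \<union> ?B))"
      by (rule arg_cong)
    also have "\<dots> = card (del_verts_E E e) + card (?A \<union> ?B)"
      using uv finite_E by (intro card_Un_disjoint) (auto simp: del_verts_E_def)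
    finally show ?thesis .
  qed
  ultimately have "card E + 1 = card (del_verts_E E e) + deg E u + deg E v"
    by (simp add: deg_def)
  then show ?thesis
    using uv by (simp add: num_edges_def)
qed

lemma sum_num_edges_del:
  "(\<Sum>e\<in>E. num_edges (del_verts_E E e)) = (num_edges E + 1) * num_edges E - M1 V E"
  "(\<Sum>e\<in>E. num_edges (del_verts_E E e) ^ 2)
    = (num_edges E + 1) ^ 2 * num_edges E - 2 * (num_edges E + 1) * M1 V E + Fidx V E + 2 * M2 E"
  "(\<Sum>e\<in>E. num_edges (del_verts_E E e) ^ 3)
    = (num_edges E + 1) ^ 3 * num_edges E - 3 * (num_edges E + 1) ^ 2 * M1 V E
      + 3 * (num_edges E + 1) * (Fidx V E + 2 * M2 E) - (M1pow 4 V E + 3 * alpha_lam 1 E)"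
  "(\<Sum>e\<in>E. num_edges (del_verts_E E e) ^ 4)
    = (num_edges E + 1) ^ 4 * num_edges E - 4 * (num_edges E + 1) ^ 3 * M1 V E
      + 6 * (num_edges E + 1) ^ 2 * (Fidx V E + 2 * M2 E)
      - 4 * (num_edges E + 1) * (M1pow 4 V E + 3 * alpha_lam 1 E)
      + (M1pow 5 V E + 4 * alpha_lam 2 E + 6 * M2sq E)"
proof -
  define c where "c = num_edges E + 1"
  define t where "t e = (\<Sum>x\<in>e. dg E x)" for e
  have m: "num_edges (del_verts_E E e) = c - t e" if "e \<in> E" for e
    using that by (simp add: num_edges_del_edge c_def t_def)
  note sums = sum.distrib sum_subtractf sum_edges_deg_sum_pow[folded t_def]
    num_edges_def[symmetric] mult.commute[of _ "num_edges E"]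
  show "(\<Sum>e\<in>E. num_edges (del_verts_E E e)) = (num_edges E + 1) * num_edges E - M1 V E"
    by (simp add: m sums flip: c_def)
  have "(\<Sum>e\<in>E. num_edges (del_verts_E E e) ^ 2) = (\<Sum>e\<in>E. c ^ 2 - 2 * c * t e + t e ^ 2)"
    by (intro sum.cong refl) (simp add: m power2_eq_square algebra_simps)
  then show "(\<Sum>e\<in>E. num_edges (del_verts_E E e) ^ 2)
    = (num_edges E + 1) ^ 2 * num_edges E - 2 * (num_edges E + 1) * M1 V E + Fidx V E + 2 * M2 E"
    by (simp add: sums flip: c_def sum_distrib_left)
  have "(\<Sum>e\<in>E. num_edges (del_verts_E E e) ^ 3)
      = (\<Sum>e\<in>E. c ^ 3 - 3 * c ^ 2 * t e + 3 * c * t e ^ 2 - t e ^ 3)"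
    by (intro sum.cong refl) (simp add: m power_numeral_reduce algebra_simps)
  then show "(\<Sum>e\<in>E. num_edges (del_verts_E E e) ^ 3)
    = (num_edges E + 1) ^ 3 * num_edges E - 3 * (num_edges E + 1) ^ 2 * M1 V E
      + 3 * (num_edges E + 1) * (Fidx V E + 2 * M2 E) - (M1pow 4 V E + 3 * alpha_lam 1 E)"
    by (simp add: sums flip: c_def sum_distrib_left)
  have "(\<Sum>e\<in>E. num_edges (del_verts_E E e) ^ 4)
      = (\<Sum>e\<in>E. c ^ 4 - 4 * c ^ 3 * t e + 6 * c ^ 2 * t e ^ 2 - 4 * c * t e ^ 3 + t e ^ 4)"
    by (intro sum.cong refl) (simp add: m power_numeral_reduce algebra_simps)
  then show "(\<Sum>e\<in>E. num_edges (del_verts_E E e) ^ 4)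
    = (num_edges E + 1) ^ 4 * num_edges E - 4 * (num_edges E + 1) ^ 3 * M1 V E
      + 6 * (num_edges E + 1) ^ 2 * (Fidx V E + 2 * M2 E)
      - 4 * (num_edges E + 1) * (M1pow 4 V E + 3 * alpha_lam 1 E)
      + (M1pow 5 V E + 4 * alpha_lam 2 E + 6 * M2sq E)"
    by (simp add: sums flip: c_def sum_distrib_left)
qed

lemma num_matchings_2:
  "real (num_matchings E 2) = (num_edges E ^ 2 + num_edges E - M1 V E) / 2"
proof -
  have "real (num_matchings E 2) = (\<Sum>e\<in>E. num_edges (del_verts_E E e)) / 2"
    using num_matchings_Suc_real[of 1]
    by (simp add: num_matchings_1[unfolded One_nat_def] num_edges_def numeral_2_eq_2)
  then show ?thesis
    by (simp add: sum_num_edges_del power2_eq_square algebra_simps)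
qed

lemma deg_del_edge:
  assumes "{u, v} \<in> E" "x \<notin> {u, v}"
  shows "dg (del_verts_E E {u, v}) x = dg E x - of_bool (x \<in> nbrs E u) - of_bool (x \<in> nbrs E v)"
proof -
  interpret G': sgraph "del_verts_V V {u, v}" "del_verts_E E {u, v}"
    by (rule sgraph_del_verts)
  have "u \<noteq> v"
    using edge_vertices[OF assms(1)] by simp
  then have "card (nbrs E x \<inter> {u, v}) = of_bool (x \<in> nbrs E u) + of_bool (x \<in> nbrs E v)"
    by (auto simp: in_nbrs_sym[of x] Int_insert_right)
  moreover have "deg (del_verts_E E {u, v}) x = card (nbrs E x - {u, v})"
    using assms(2) by (simp add: G'.deg_eq_card_nbrs nbrs_del_verts)
  ultimately show ?thesis
    using card_Int_Diff[OF finite_nbrs, of x "{u, v}"] by (simp add: deg_eq_card_nbrs)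
qed

lemma sum_of_bool_nbr:
  assumes "{u, v} \<in> E"
  shows "(\<Sum>x\<in>V - {u, v}. of_bool (x \<in> nbrs E u) * h x) = nbr_sum E h u - h v"
proof -
  have "(\<Sum>x\<in>V - {u, v}. of_bool (x \<in> nbrs E u) * h x) = sum h (nbrs E u - {v})"
    using finite_V nbrs_subset[of u] not_in_nbrs_self[of u]
    by (auto simp: sum.If_cases Int_absorb1 intro!: sum.cong)
  then show ?thesis
    using assms by (simp add: nbr_sum_def sum_diff1 finite_nbrs in_nbrs_iff)
qed

lemma sum_nbrs_minus_edge:
  assumes "u \<noteq> v"
  shows "(\<Sum>y\<in>nbrs E x - {u, v}. h y)
    = nbr_sum E h x - of_bool (x \<in> nbrs E u) * h u - of_bool (x \<in> nbrs E v) * h v"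
proof -
  have "nbr_sum E h x = (\<Sum>y\<in>nbrs E x - {u, v}. h y) + (\<Sum>y\<in>nbrs E x \<inter> {u, v}. h y)"
    unfolding nbr_sum_def using finite_nbrs[of x]
    by (metis Diff_Diff_Int Diff_subset Int_lower1 add.commute sum.subset_diff)
  moreover have "(\<Sum>y\<in>nbrs E x \<inter> {u, v}. h y)
      = of_bool (x \<in> nbrs E u) * h u + of_bool (x \<in> nbrs E v) * h v"
    using assms by (auto simp: in_nbrs_sym[of x] Int_insert_right)
  ultimately show ?thesis
    by simp
qed

lemma sum_split_edge:
  assumes "{u, v} \<in> E"
  shows "(\<Sum>x\<in>V. f x) = f u + f v + (\<Sum>x\<in>V - {u, v}. f x)"
  using sum.subset_diff[of "{u, v}" V f] edge_vertices[OF assms] finite_V by (simp add: ac_simps)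

end

locale triangle_free_sgraph = sgraph +
  assumes triangle_free: "{x, y} \<in> E \<Longrightarrow> {y, z} \<in> E \<Longrightarrow> {x, z} \<notin> E"
begin

lemma triangle_free_del_verts: "triangle_free_sgraph (del_verts_V V S) (del_verts_E E S)"
  using sgraph_del_verts triangle_free
  by (auto simp: triangle_free_sgraph_def triangle_free_sgraph_axioms_def del_verts_E_def)

lemma sum_deg_del_edge:
  fixes g :: "real \<Rightarrow> real"
  assumes "e \<in> E"
  shows "(\<Sum>x\<in>del_verts_V V e. g (dg (del_verts_E E e) x)) = (\<Sum>x\<in>V. g (dg E x))
    - (\<Sum>x\<in>e. g (dg E x) + nbr_sum E (\<lambda>y. g (dg E y) - g (dg E y - 1)) x
        - (g (dg E x) - g (dg E x - 1)))"
proof -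
  obtain u v where uv: "u \<noteq> v" "u \<in> V" "v \<in> V" and e: "e = {u, v}"
    using assms by (auto elim: edgeE)
  have uvE: "{u, v} \<in> E"
    using assms e by simp
  define D where "D = (\<lambda>x. g (dg E x) - g (dg E x - 1))"
  have "g (dg (del_verts_E E e) x)
      = g (dg E x) - of_bool (x \<in> nbrs E u) * D x - of_bool (x \<in> nbrs E v) * D x"
    if "x \<in> V - {u, v}" for x
  proof -
    have "\<not> (x \<in> nbrs E u \<and> x \<in> nbrs E v)"
      using triangle_free[of x u v] uvE by (auto simp: in_nbrs_iff insert_commute)
    moreover have
      "dg (del_verts_E E e) x = dg E x - of_bool (x \<in> nbrs E u) - of_bool (x \<in> nbrs E v)"
      using deg_del_edge[OF uvE] that e by simp
    ultimately show ?thesis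
      by (cases "x \<in> nbrs E u"; cases "x \<in> nbrs E v") (simp_all add: D_def)
  qed
  then have "(\<Sum>x\<in>V - {u, v}. g (dg (del_verts_E E e) x))
      = (\<Sum>x\<in>V - {u, v}. g (dg E x)) - (nbr_sum E D u - D v) - (nbr_sum E D v - D u)"
    using sum_of_bool_nbr[OF uvE, of D] sum_of_bool_nbr[of v u D] uvE
    by (simp add: sum_subtractf insert_commute)
  moreover have "(\<Sum>x\<in>V. g (dg E x)) = g (dg E u) + g (dg E v) + (\<Sum>x\<in>V - {u, v}. g (dg E x))"
    using sum.subset_diff[of "{u, v}" V "\<lambda>x. g (dg E x)"] uv finite_V by (simp add: ac_simps)
  ultimately show ?thesis
    unfolding e del_verts_V_def D_def using uv by simp
qed

lemma sum_M1pow_del: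
  "(\<Sum>e\<in>E. M1pow k (del_verts_V V e) (del_verts_E E e)) = num_edges E * M1pow k V E
    - M1pow (Suc k) V E - (\<Sum>x\<in>V. (nbr_deg_sum E x - dg E x) * (dg E x ^ k - (dg E x - 1) ^ k))"
proof -
  define D where "D = (\<lambda>x. dg E x ^ k - (dg E x - 1) ^ k)"
  define \<psi> where "\<psi> = (\<lambda>x. dg E x ^ k + nbr_sum E D x - D x)"
  have "M1pow k (del_verts_V V e) (del_verts_E E e) = M1pow k V E - (\<Sum>x\<in>e. \<psi> x)" if "e \<in> E" for e
    using sum_deg_del_edge[OF that, of "\<lambda>t. t ^ k"] by (simp add: M1pow_def D_def \<psi>_def)
  then have "(\<Sum>e\<in>E. M1pow k (del_verts_V V e) (del_verts_E E e))
      = num_edges E * M1pow k V E - (\<Sum>x\<in>V. dg E x * \<psi> x)"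
    by (simp add: sum_subtractf sum_edges_sum num_edges_def)
  also have "(\<Sum>x\<in>V. dg E x * \<psi> x)
      = M1pow (Suc k) V E + (\<Sum>x\<in>V. dg E x * nbr_sum E D x) - (\<Sum>x\<in>V. dg E x * D x)"
    by (simp add: \<psi>_def distrib_left right_diff_distrib sum.distrib sum_subtractf sum_deg_mult_pow)
  also have "(\<Sum>x\<in>V. dg E x * nbr_sum E D x) = (\<Sum>x\<in>V. D x * nbr_deg_sum E x)"
    by (rule sum_mult_nbr_sum_swap)
  finally show ?thesis
    by (simp add: D_def sum_subtractf left_diff_distrib mult.commute)
qed

lemma sum_M1pow_del_cubic:
  assumes "\<And>t :: real. t ^ k - (t - 1) ^ k = a + b * t + c * t ^ 2 + d * t ^ 3"
  shows "(\<Sum>e\<in>E. M1pow k (del_verts_V V e) (del_verts_E E e))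
    = num_edges E * M1pow k V E - M1pow (Suc k) V E
      - (a * (M1 V E - 2 * num_edges E) + b * (2 * M2 E - M1 V E) + c * (alpha_lam 1 E - Fidx V E)
        + d * (alpha_lam 2 E - M1pow 4 V E))"
  unfolding sum_M1pow_del assms sum_nbr_excess_cubic ..

lemma sum_M1_del:
  "(\<Sum>e\<in>E. M1 (del_verts_V V e) (del_verts_E E e))
    = (num_edges E + 3) * M1 V E - Fidx V E - 4 * M2 E - 2 * num_edges E"
proof -
  have "t ^ 2 - (t - 1) ^ 2 = - 1 + 2 * t + 0 * t ^ 2 + 0 * t ^ 3" for t :: real
    by algebra
  from sum_M1pow_del_cubic[OF this] show ?thesis
    by (simp add: M1_def Fidx_def algebra_simps)
qed

lemma sum_Fidx_del:
  "(\<Sum>e\<in>E. Fidx (del_verts_V V e) (del_verts_E E e))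
    = (num_edges E + 3) * Fidx V E - M1pow 4 V E - 3 * alpha_lam 1 E + 6 * M2 E - 4 * M1 V E
      + 2 * num_edges E"
proof -
  have "t ^ 3 - (t - 1) ^ 3 = 1 + (- 3) * t + 3 * t ^ 2 + 0 * t ^ 3" for t :: real
    by algebra
  from sum_M1pow_del_cubic[OF this] show ?thesis
    by (simp add: Fidx_def algebra_simps)
qed

lemma sum_M1pow_4_del:
  "(\<Sum>e\<in>E. M1pow 4 (del_verts_V V e) (del_verts_E E e))
    = (num_edges E + 4) * M1pow 4 V E - M1pow 5 V E - 4 * alpha_lam 2 E + 6 * alpha_lam 1 E
      - 6 * Fidx V E - 8 * M2 E + 5 * M1 V E - 2 * num_edges E"
proof -
  have "t ^ 4 - (t - 1) ^ 4 = - 1 + 4 * t + (- 6) * t ^ 2 + 4 * t ^ 3" for t :: real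
    by algebra
  from sum_M1pow_del_cubic[OF this] show ?thesis
    by (simp add: algebra_simps)
qed

lemma M1_del_edge:
  assumes "e \<in> E"
  shows "M1 (del_verts_V V e) (del_verts_E E e)
    = M1 V E - (\<Sum>x\<in>e. dg E x ^ 2 + 2 * nbr_deg_sum E x - 3 * dg E x + 1)"
proof -
  have nbr: "nbr_sum E (\<lambda>y. dg E y ^ 2 - (dg E y - 1) ^ 2) x = 2 * nbr_deg_sum E x - dg E x" for x
    by (simp add: nbr_sum_def power2_eq_square algebra_simps sum_subtractf deg_eq_card_nbrs
        flip: sum_distrib_left)
  have "M1 (del_verts_V V e) (del_verts_E E e) = M1 V E - (\<Sum>x\<in>e. dg E x ^ 2
      + nbr_sum E (\<lambda>y. dg E y ^ 2 - (dg E y - 1) ^ 2) x - (dg E x ^ 2 - (dg E x - 1) ^ 2))"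
    unfolding M1_def M1pow_def by (rule sum_deg_del_edge[OF assms, of "\<lambda>t. t ^ 2"])
  also have "\<dots> = M1 V E - (\<Sum>x\<in>e. dg E x ^ 2 + 2 * nbr_deg_sum E x - 3 * dg E x + 1)"
    unfolding nbr by (simp add: power2_eq_square algebra_simps)
  finally show ?thesis .
qed

lemma sum_num_edges_mult_M1_del:
  "(\<Sum>e\<in>E. num_edges (del_verts_E E e) * M1 (del_verts_V V e) (del_verts_E E e))
    = (num_edges E + 1) * ((num_edges E + 3) * M1 V E - Fidx V E - 4 * M2 E - 2 * num_edges E)
      - M1 V E ^ 2 + M1pow 4 V E + 3 * alpha_lam 1 E + 2 * nbr_deg_sum_sq V E - 3 * Fidx V E
      - 6 * M2 E + 2 * M1 V E"
proof -
  define c where "c = num_edges E + 1"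
  define \<phi> where "\<phi> = (\<lambda>x. dg E x ^ 2 + 2 * nbr_deg_sum E x - 3 * dg E x + 1)"
  define t where "t = (\<lambda>e. \<Sum>x\<in>e. dg E x)"
  define \<Phi> where "\<Phi> = (\<lambda>e. \<Sum>x\<in>e. \<phi> x)"
  have "(\<Sum>e\<in>E. num_edges (del_verts_E E e) * M1 (del_verts_V V e) (del_verts_E E e))
      = (\<Sum>e\<in>E. c * M1 V E - c * \<Phi> e - M1 V E * t e + t e * \<Phi> e)"
    by (rule sum.cong) (simp_all add: num_edges_del_edge M1_del_edge c_def t_def \<Phi>_def \<phi>_def
        algebra_simps)
  also have "\<dots> = c * M1 V E * num_edges E - c * (\<Sum>x\<in>V. dg E x * \<phi> x) - M1 V E * M1 V E
      + ((\<Sum>x\<in>V. dg E x * dg E x * \<phi> x) + (\<Sum>x\<in>V. \<phi> x * nbr_deg_sum E x))"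
    using sum_edges_sum_mult_sum[of "dg E" \<phi>] sum_mult_nbr_sum_swap[of "dg E" \<phi>]
    by (simp add: sum.distrib sum_subtractf sum_edges_sum num_edges_def M1_def M1pow_def
        power2_eq_square t_def \<Phi>_def flip: sum_distrib_left)
  also have "(\<Sum>x\<in>V. dg E x * \<phi> x) = (\<Sum>x\<in>V. dg E x ^ 3 + 2 * (dg E x * nbr_deg_sum E x)
      - 3 * dg E x ^ 2 + dg E x)"
    by (rule sum.cong) (simp_all add: \<phi>_def power2_eq_square power3_eq_cube algebra_simps)
  also have "\<dots> = Fidx V E + 4 * M2 E - 3 * M1 V E + 2 * num_edges E"
    by (simp only: sum.distrib sum_subtractf flip: sum_distrib_left)
      (simp add: vertex_sums M1_def Fidx_def)
  also have "(\<Sum>x\<in>V. dg E x * dg E x * \<phi> x) = (\<Sum>x\<in>V. dg E x ^ 4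
      + 2 * (dg E x ^ 2 * nbr_deg_sum E x) - 3 * dg E x ^ 3 + dg E x ^ 2)"
    by (rule sum.cong) (simp_all add: \<phi>_def power_numeral_reduce algebra_simps)
  also have "\<dots> = M1pow 4 V E + 2 * alpha_lam 1 E - 3 * Fidx V E + M1 V E"
    by (simp only: sum.distrib sum_subtractf flip: sum_distrib_left)
      (simp add: vertex_sums M1_def Fidx_def)
  also have "(\<Sum>x\<in>V. \<phi> x * nbr_deg_sum E x) = (\<Sum>x\<in>V. dg E x ^ 2 * nbr_deg_sum E x
      + 2 * nbr_deg_sum E x ^ 2 - 3 * (dg E x * nbr_deg_sum E x) + nbr_deg_sum E x)"
    by (rule sum.cong) (simp_all add: \<phi>_def power2_eq_square algebra_simps)
  also have "\<dots> = alpha_lam 1 E + 2 * nbr_deg_sum_sq V E - 6 * M2 E + M1 V E"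
    by (simp only: sum.distrib sum_subtractf flip: sum_distrib_left)
      (simp add: vertex_sums)
  finally show ?thesis
    by (simp add: c_def power2_eq_square algebra_simps)
qed

lemma num_matchings_3:
  "real (num_matchings E 3) = (num_edges E ^ 3 + 3 * num_edges E ^ 2 + 4 * num_edges E
    - (3 * num_edges E + 6) * M1 V E + 2 * Fidx V E + 6 * M2 E) / 6"
proof -
  have "real (num_matchings E 3) = (\<Sum>e\<in>E. real (num_matchings (del_verts_E E e) 2)) / 3"
    using num_matchings_Suc_real[of 2] by (simp add: numeral_3_eq_3)
  also have "\<dots> = ((\<Sum>e\<in>E. num_edges (del_verts_E E e) ^ 2) + (\<Sum>e\<in>E. num_edges (del_verts_E E e))
      - (\<Sum>e\<in>E. M1 (del_verts_V V e) (del_verts_E E e))) / 6"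
    by (simp add: sgraph.num_matchings_2[OF sgraph_del_verts] sum_subtractf sum.distrib
        flip: sum_divide_distrib)
  finally show ?thesis
    unfolding sum_num_edges_del sum_M1_del
    by (simp add: power2_eq_square power3_eq_cube algebra_simps)
qed

end

locale girth5_sgraph = triangle_free_sgraph +
  assumes C4_free:
    "{w, x} \<in> E \<Longrightarrow> {x, y} \<in> E \<Longrightarrow> {y, z} \<in> E \<Longrightarrow> {z, w} \<in> E \<Longrightarrow> w = y \<or> x = z"
begin

lemma girth5_del_verts: "girth5_sgraph (del_verts_V V S) (del_verts_E E S)"
  using triangle_free_del_verts C4_free
  by (auto simp: girth5_sgraph_def girth5_sgraph_axioms_def del_verts_E_def)

context
  fixes u v
  assumes edge: "{u, v} \<in> E"
begin

private abbreviation (input) "W \<equiv> V - {u, v}"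
private abbreviation (input) "E' \<equiv> del_verts_E E {u, v}"
private abbreviation (input) "c x \<equiv> of_bool (x \<in> nbrs E u) + (of_bool (x \<in> nbrs E v) :: real)"

lemma uv_neq: "u \<noteq> v"
  using edge_vertices[OF edge] by simp

lemma
  sum_of_bool_nbr_u: "(\<Sum>x\<in>W. of_bool (x \<in> nbrs E u) * h x) = nbr_sum E h u - h v" and
  sum_of_bool_nbr_v: "(\<Sum>x\<in>W. of_bool (x \<in> nbrs E v) * h x) = nbr_sum E h v - h u"
  using sum_of_bool_nbr[OF edge] sum_of_bool_nbr[of v u] edge by (simp_all add: insert_commute)

text \<open>If c x * c y were nonzero, the arc xy would close a triangle or a 4-cycle through u or v.\<close>

lemma edge_nbrs_nonadjacent:
  assumes "x \<in> W" "y \<in> nbrs E x - {u, v}"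
  shows "c x * c y = 0"
proof -
  have xy: "{x, y} \<in> E"
    using assms by (simp add: in_nbrs_iff)
  have "\<not> (x \<in> nbrs E a \<and> y \<in> nbrs E a)" for a
    using triangle_free[of a x y] xy by (auto simp: in_nbrs_iff)
  moreover have "\<not> (x \<in> nbrs E u \<and> y \<in> nbrs E v)" "\<not> (x \<in> nbrs E v \<and> y \<in> nbrs E u)"
    using C4_free[of u x y v] C4_free[of v x y u] edge xy assms
    by (auto simp: in_nbrs_iff insert_commute)
  ultimately show ?thesis
    by auto
qed

lemma arc_sum_del_edge: "arc_sum W E' f = (\<Sum>x\<in>W. \<Sum>y\<in>nbrs E x - {u, v}. f x y)"
  by (auto simp: arc_sum_def nbrs_del_verts intro!: sum.cong)

lemma arc_sum_del_edge_deg_mult_deg: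
  "arc_sum W E' (\<lambda>x y. dg E x * dg E y) = 2 * M2 E - 2 * dg E u * nbr_deg_sum E u
    - 2 * dg E v * nbr_deg_sum E v + 2 * dg E u * dg E v"
proof -
  have "(\<Sum>y\<in>nbrs E x - {u, v}. dg E x * dg E y) = dg E x * nbr_deg_sum E x
      - dg E u * (of_bool (x \<in> nbrs E u) * dg E x) - dg E v * (of_bool (x \<in> nbrs E v) * dg E x)"
    for x by (simp add: sum_nbrs_minus_edge[OF uv_neq] nbr_sum_cmult)
  then have "arc_sum W E' (\<lambda>x y. dg E x * dg E y)
      = (\<Sum>x\<in>W. dg E x * nbr_deg_sum E x) - dg E u * (\<Sum>x\<in>W. of_bool (x \<in> nbrs E u) * dg E x)
        - dg E v * (\<Sum>x\<in>W. of_bool (x \<in> nbrs E v) * dg E x)"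
    by (simp only: arc_sum_del_edge sum_subtractf flip: sum_distrib_left)
  then show ?thesis
    using sum_split_edge[OF edge, of "\<lambda>x. dg E x * nbr_deg_sum E x"]
    unfolding sum_of_bool_nbr_u sum_of_bool_nbr_v sum_deg_mult_nbr_deg_sum(1)
    by (simp add: algebra_simps)
qed

lemma arc_sum_del_edge_count_mult_deg:
  "arc_sum W E' (\<lambda>x y. c x * dg E y)
    = nbr_sum E (nbr_deg_sum E) u - nbr_deg_sum E v - dg E u * (dg E u - 1)
    + nbr_sum E (nbr_deg_sum E) v - nbr_deg_sum E u - dg E v * (dg E v - 1)"
proof -
  have "(\<Sum>y\<in>nbrs E x - {u, v}. c x * dg E y)
      = of_bool (x \<in> nbrs E u) * (nbr_deg_sum E x - dg E u)
        + of_bool (x \<in> nbrs E v) * (nbr_deg_sum E x - dg E v)" for x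
  proof -
    have "\<not> (x \<in> nbrs E u \<and> x \<in> nbrs E v)"
      using triangle_free[of u x v] edge by (auto simp: in_nbrs_iff insert_commute)
    then show ?thesis
      by (cases "x \<in> nbrs E u"; cases "x \<in> nbrs E v")
        (simp_all add: sum_nbrs_minus_edge[OF uv_neq] nbr_sum_cmult)
  qed
  then have "arc_sum W E' (\<lambda>x y. c x * dg E y)
      = (\<Sum>x\<in>W. of_bool (x \<in> nbrs E u) * (nbr_deg_sum E x - dg E u))
        + (\<Sum>x\<in>W. of_bool (x \<in> nbrs E v) * (nbr_deg_sum E x - dg E v))"
    by (simp only: arc_sum_del_edge sum.distrib)
  then show ?thesis
    unfolding sum_of_bool_nbr_u sum_of_bool_nbr_v nbr_sum_diff nbr_sum_const
    by (simp add: algebra_simps)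
qed

lemma M2_del_edge_uv:
  "M2 E' = M2 E + dg E u * dg E v
    + (dg E u * (dg E u - 1) + (1 - dg E u) * nbr_deg_sum E u - nbr_sum E (nbr_deg_sum E) u)
    + (dg E v * (dg E v - 1) + (1 - dg E v) * nbr_deg_sum E v - nbr_sum E (nbr_deg_sum E) v)"
proof -
  interpret G': sgraph W E'
    using sgraph_del_verts[of "{u, v}"] by (simp add: del_verts_V_def)
  have "M2 E' = arc_sum W E' (\<lambda>x y. dg E x * dg E y - c x * dg E y - dg E x * c y) / 2"
    unfolding M2_def G'.sum_edges_eq_arc_sum
  proof (intro arg_cong[where f = "\<lambda>t. t / 2"] arc_sum_cong)
    fix x y assume x: "x \<in> W" and y: "y \<in> nbrs E' x"
    then have y': "y \<in> nbrs E x - {u, v}" "y \<in> W"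
      using nbrs_subset by (auto simp: nbrs_del_verts)
    have "dg E' x * dg E' y = dg E x * dg E y - c x * dg E y - dg E x * c y + c x * c y"
      using x y' by (simp add: deg_del_edge[OF edge] algebra_simps)
    then show "(\<Prod>z\<in>{x, y}. dg E' z) = dg E x * dg E y - c x * dg E y - dg E x * c y"
      using edge_nbrs_nonadjacent[OF x y'(1)] G'.nbr_neq[OF y] by simp
  qed
  also have "\<dots> = arc_sum W E' (\<lambda>x y. dg E x * dg E y) / 2 - arc_sum W E' (\<lambda>x y. c x * dg E y)"
    using G'.arc_sum_swap[of "\<lambda>x y. dg E x * c y"] by (simp add: arc_sum_diff mult.commute)
  finally show ?thesis
    unfolding arc_sum_del_edge_deg_mult_deg arc_sum_del_edge_count_mult_deg
    by (simp add: field_simps)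
qed

end

lemma M2_del_edge:
  assumes "e \<in> E"
  shows "M2 (del_verts_E E e) = M2 E + (\<Prod>x\<in>e. dg E x) + (\<Sum>x\<in>e. dg E x * (dg E x - 1)
    + (1 - dg E x) * nbr_deg_sum E x - nbr_sum E (nbr_deg_sum E) x)"
proof -
  obtain u v where "u \<noteq> v" "e = {u, v}"
    using assms by (auto elim: edgeE)
  with assms show ?thesis
    by (simp add: M2_del_edge_uv)
qed

lemma sum_M2_del:
  "(\<Sum>e\<in>E. M2 (del_verts_E E e))
    = (num_edges E + 3) * M2 E + Fidx V E - M1 V E - alpha_lam 1 E - nbr_deg_sum_sq V E"
proof -
  define \<psi> where "\<psi> = (\<lambda>x. dg E x * (dg E x - 1) + (1 - dg E x) * nbr_deg_sum E x
    - nbr_sum E (nbr_deg_sum E) x)"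
  have "(\<Sum>e\<in>E. M2 (del_verts_E E e)) = num_edges E * M2 E + M2 E + (\<Sum>x\<in>V. dg E x * \<psi> x)"
    by (simp add: M2_del_edge \<psi>_def sum.distrib sum_edges_sum num_edges_def flip: M2_def)
  also have "(\<Sum>x\<in>V. dg E x * \<psi> x) = (\<Sum>x\<in>V. (dg E x ^ 3 - dg E x ^ 2 + dg E x * nbr_deg_sum E x
      - dg E x ^ 2 * nbr_deg_sum E x) - dg E x * nbr_sum E (nbr_deg_sum E) x)"
    by (intro sum.cong refl) (simp add: \<psi>_def power2_eq_square power3_eq_cube algebra_simps)
  also have "\<dots> = (\<Sum>x\<in>V. dg E x ^ 3 - dg E x ^ 2 + dg E x * nbr_deg_sum E x
      - dg E x ^ 2 * nbr_deg_sum E x) - (\<Sum>x\<in>V. dg E x * nbr_sum E (nbr_deg_sum E) x)"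
    by (rule sum_subtractf)
  also have "(\<Sum>x\<in>V. dg E x * nbr_sum E (nbr_deg_sum E) x) = nbr_deg_sum_sq V E"
    using sum_mult_nbr_sum_swap[of "dg E" "nbr_deg_sum E"]
    by (simp add: nbr_deg_sum_sq_def power2_eq_square)
  also have "(\<Sum>x\<in>V. dg E x ^ 3 - dg E x ^ 2 + dg E x * nbr_deg_sum E x
      - dg E x ^ 2 * nbr_deg_sum E x) = Fidx V E - M1 V E + 2 * M2 E - alpha_lam 1 E"
    by (simp only: sum.distrib sum_subtractf) (simp add: vertex_sums M1_def Fidx_def)
  finally show ?thesis
    by (simp add: algebra_simps)
qed

lemma num_matchings_4:
  "real (num_matchings E 4) = (1/8) * M1 V E ^ 2 + (1/3) * (num_edges E * Fidx V E)
    - (1/4) * (num_edges E ^ 2 * M1 V E) - EM2 E + num_edges E * M2 E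
    + (1/24) * num_edges E ^ 4 + (1/4) * num_edges E ^ 3 + (19/24) * num_edges E ^ 2
    - (11/4) * num_edges E - (5/4) * (num_edges E * M1 V E) + (7/2) * M1 V E - (3/2) * Fidx V E
    + (1/4) * M1pow 4 V E - 2 * M2 E"
proof -
  let ?m = "\<lambda>e. num_edges (del_verts_E E e)"
  let ?M1 = "\<lambda>e. M1 (del_verts_V V e) (del_verts_E E e)"
  have p3: "real (num_matchings (del_verts_E E e) 3) = (?m e ^ 3 + 3 * ?m e ^ 2 + 4 * ?m e
      - 3 * (?m e * ?M1 e) - 6 * ?M1 e + 2 * Fidx (del_verts_V V e) (del_verts_E E e)
      + 6 * M2 (del_verts_E E e)) / 6" for e
    by (simp add: triangle_free_sgraph.num_matchings_3[OF triangle_free_del_verts] algebra_simps)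
  have "real (num_matchings E 4) = (\<Sum>e\<in>E. real (num_matchings (del_verts_E E e) 3)) / 4"
    using num_matchings_Suc_real[of 3] by simp
  also have "\<dots> = (\<Sum>e\<in>E. ?m e ^ 3 + 3 * ?m e ^ 2 + 4 * ?m e
      - 3 * (?m e * ?M1 e) - 6 * ?M1 e + 2 * Fidx (del_verts_V V e) (del_verts_E E e)
      + 6 * M2 (del_verts_E E e)) / 24"
    by (simp only: p3 flip: sum_divide_distrib)
  also have "\<dots> = ((\<Sum>e\<in>E. ?m e ^ 3) + 3 * (\<Sum>e\<in>E. ?m e ^ 2) + 4 * (\<Sum>e\<in>E. ?m e)
      - 3 * (\<Sum>e\<in>E. ?m e * ?M1 e) - 6 * (\<Sum>e\<in>E. ?M1 e)
      + 2 * (\<Sum>e\<in>E. Fidx (del_verts_V V e) (del_verts_E E e))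
      + 6 * (\<Sum>e\<in>E. M2 (del_verts_E E e))) / 24"
    by (simp only: sum.distrib sum_subtractf flip: sum_distrib_left)
  finally show ?thesis
    unfolding sum_num_edges_del sum_num_edges_mult_M1_del sum_M1_del sum_Fidx_del sum_M2_del EM2_eq
    by (simp add: field_simps power_numeral_reduce)
qed

end

section \<open>Girth\<close>

lemma girth_le_cycle:
  assumes "distinct xs" "length xs \<ge> 3" "set xs \<subseteq> V"
    and "\<forall>i<length xs. {xs ! i, xs ! ((i + 1) mod length xs)} \<in> E"
  shows "girth V E \<le> enat (length xs)"
proof -
  have "has_cycle_len V E (length xs)"
    unfolding has_cycle_len_def
  proof (intro conjI exI[of _ "\<lambda>i. xs ! i"])
    show "inj_on (\<lambda>i. xs ! i) {..<length xs}"
      using assms(1) by (simp add: inj_on_def nth_eq_iff_index_eq)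
  qed (use assms in \<open>auto simp: set_conv_nth\<close>)
  then show ?thesis
    unfolding girth_def by (blast intro: Inf_lower)
qed

context sgraph
begin

lemma girth_ge_5_triangle_free:
  assumes "girth V E \<ge> 5" "{x, y} \<in> E" "{y, z} \<in> E"
  shows "{x, z} \<notin> E"
proof
  assume xz: "{x, z} \<in> E"
  let ?c = "[x, y, z]"
  have "\<forall>i<length ?c. {?c ! i, ?c ! ((i + 1) mod length ?c)} \<in> E"
  proof (intro allI impI)
    fix i :: nat
    assume "i < length ?c"
    then consider "i = 0" | "i = 1" | "i = 2"
      by fastforce
    then show "{?c ! i, ?c ! ((i + 1) mod length ?c)} \<in> E"
      by cases (use assms(2,3) xz in \<open>auto simp: insert_commute\<close>)
  qed
  then have "girth V E \<le> enat (length ?c)"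
    using assms(2,3) xz edge_vertices[of x y] edge_vertices[of y z] edge_vertices[of x z]
    by (intro girth_le_cycle) auto
  with assms(1) have "(5::enat) \<le> enat (length ?c)"
    by (rule order_trans)
  then show False
    by (simp add: numeral_eq_enat)
qed

lemma girth_ge_5_C4_free:
  assumes "girth V E \<ge> 5" "{w, x} \<in> E" "{x, y} \<in> E" "{y, z} \<in> E" "{z, w} \<in> E"
  shows "w = y \<or> x = z"
proof (rule ccontr)
  assume distinct: "\<not> (w = y \<or> x = z)"
  let ?c = "[w, x, y, z]"
  have "\<forall>i<length ?c. {?c ! i, ?c ! ((i + 1) mod length ?c)} \<in> E"
  proof (intro allI impI)
    fix i :: nat
    assume "i < length ?c"
    then consider "i = 0" | "i = 1" | "i = 2" | "i = 3"
      by fastforce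
    then show "{?c ! i, ?c ! ((i + 1) mod length ?c)} \<in> E"
      by cases (use assms(2-5) in \<open>auto simp: insert_commute\<close>)
  qed
  then have "girth V E \<le> enat (length ?c)"
    using assms(2-5) distinct
      edge_vertices[of w x] edge_vertices[of x y] edge_vertices[of y z] edge_vertices[of z w]
    by (intro girth_le_cycle) auto
  with assms(1) have "(5::enat) \<le> enat (length ?c)"
    by (rule order_trans)
  then show False
    by (simp add: numeral_eq_enat)
qed

lemma girth5_sgraph_if_girth_ge_5: "girth V E \<ge> 5 \<Longrightarrow> girth5_sgraph V E"
  by unfold_locales (auto dest: girth_ge_5_triangle_free girth_ge_5_C4_free)

end

theorem theorem2p10:
  fixes V :: "'a set" and E :: "'a set set"
  assumes "simple_graph V E" and "girth V E \<ge> 5"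
  shows "real (num_matchings E 5) = (1/5) * (
      (1/24) * num_edges E * (num_edges E ^ 4 + 10 * num_edges E ^ 3 + 43 * num_edges E ^ 2
          + 54 * num_edges E - 328)
    + (5/4) * M1 V E ^ 2
    - (1/2) * alpha_lam 1 E * (num_edges E - 7)
    - (5/6) * alpha_lam 2 E
    - (1/12) * M1 V E * (2 * num_edges E ^ 3 + 30 * num_edges E ^ 2 + 61 * num_edges E - 225)
    + (1/2) * beta_idx E
    + (1/12) * M2 E * (6 * num_edges E ^ 2 + 66 * num_edges E - 239)
    + (1/24) * Fidx V E * (6 * num_edges E ^ 2 + 24 * num_edges E - 149)
    + (1/12) * M1pow 4 V E * (num_edges E + 10)
    + (1/4) * M2sq E
    - EM2 E
    - (5/24) * M1pow 5 V E
    + (1/8) * (\<Sum>e\<in>E. M1 (del_verts_V V e) (del_verts_E E e) ^ 2)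
    + (1/3) * (\<Sum>e\<in>E. num_edges (del_verts_E E e) * Fidx (del_verts_V V e) (del_verts_E E e))
    - (1/4) * (\<Sum>e\<in>E. num_edges (del_verts_E E e) ^ 2 * M1 (del_verts_V V e) (del_verts_E E e))
    - (\<Sum>e\<in>E. EM2 (del_verts_E E e))
    + (\<Sum>e\<in>E. num_edges (del_verts_E E e) * M2 (del_verts_E E e)))"
proof -
  interpret girth5_sgraph V E
    by (intro sgraph.girth5_sgraph_if_girth_ge_5 sgraph.intro assms)
  let ?m = "\<lambda>e. num_edges (del_verts_E E e)" and ?V = "\<lambda>e. del_verts_V V e"
    and ?E = "\<lambda>e. del_verts_E E e"
  have "real (num_matchings E 5) = (\<Sum>e\<in>E. real (num_matchings (?E e) 4)) / 5"
    using num_matchings_Suc_real[of 4] by simp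
  also have "(\<Sum>e\<in>E. real (num_matchings (?E e) 4))
    = (1/8) * (\<Sum>e\<in>E. M1 (?V e) (?E e) ^ 2) + (1/3) * (\<Sum>e\<in>E. ?m e * Fidx (?V e) (?E e))
      - (1/4) * (\<Sum>e\<in>E. ?m e ^ 2 * M1 (?V e) (?E e)) - (\<Sum>e\<in>E. EM2 (?E e))
      + (\<Sum>e\<in>E. ?m e * M2 (?E e)) + (1/24) * (\<Sum>e\<in>E. ?m e ^ 4) + (1/4) * (\<Sum>e\<in>E. ?m e ^ 3)
      + (19/24) * (\<Sum>e\<in>E. ?m e ^ 2) - (11/4) * (\<Sum>e\<in>E. ?m e)
      - (5/4) * (\<Sum>e\<in>E. ?m e * M1 (?V e) (?E e)) + (7/2) * (\<Sum>e\<in>E. M1 (?V e) (?E e))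
      - (3/2) * (\<Sum>e\<in>E. Fidx (?V e) (?E e)) + (1/4) * (\<Sum>e\<in>E. M1pow 4 (?V e) (?E e))
      - 2 * (\<Sum>e\<in>E. M2 (?E e))"
    by (simp only: girth5_sgraph.num_matchings_4[OF girth5_del_verts] sum.distrib sum_subtractf
        flip: sum_distrib_left)
  finally show ?thesis
    unfolding sum_num_edges_del sum_num_edges_mult_M1_del sum_M1_del sum_Fidx_del sum_M1pow_4_del
      sum_M2_del EM2_eq beta_idx_eq
    by (simp add: field_simps power_numeral_reduce)
qed

end
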